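(* Suppose that for every finite graph $G=(V,E)$, every ferromagnetic pair interactions $\mathbf J$ on $G$, every $k\in\mathbb N$, every $j_1,\dots,j_{2k}\in V$ (not necessarily distinct) and every $u_0v_0\in E$ with $v_0\notin\{j_1,\dots,j_{2k}\}$, one has $(-1)^{k-1}\partial u_{2k}(\sigma_{j_1},\dots,\sigma_{j_{2k}})/\partial J_{u_0v_0}\ge0$. Then for every finite graph $G$, every ferromagnetic $\mathbf J$ on $G$, every $k\in\mathbb N$, every $j_1,\dots,j_{2k}\in V$ and every $u_0v_0\in E$ with $u_0\in\{j_1,\dots,j_{2k}\}$ and $v_0\in\{j_1,\dots,j_{2k}\}$, one also has $$(-1)^{k-1}\frac{\partial u_{2k}(\sigma_{j_1},\dots,\sigma_{j_{2k}})}{\partial J_{u_0v_0}}\ge0.$$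
   Context: Ferromagnetic pair interactions: $\mathbf J=(J_e)_{e\in E}$ with $J_e\ge0$. Ising model: $\mathbb P_G(\sigma)=\exp[\sum_{uv\in E}J_{uv}\sigma_u\sigma_v]/Z_G$ on $\{-1,1\}^V$, expectation $\langle\cdot\rangle_G$. Ursell function: $u_m(\sigma_{j_1},\dots,\sigma_{j_m})=\sum_{\mathscr P}(-1)^{|\mathscr P|-1}(|\mathscr P|-1)!\prod_{P\in\mathscr P}\langle\prod_{i\in P}\sigma_{j_i}\rangle_G$, the sum over all set partitions $\mathscr P$ of $\{1,\dots,m\}$; it is regarded as a function of $\mathbf J$. *)

theory Defs
  imports "HOL-Analysis.Analysis" "HOL-Library.Disjoint_Sets" "HOL-Library.FuncSet"
begin

definition finite_graph :: "nat set \<Rightarrow> nat set set \<Rightarrow> bool" where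
  "finite_graph V E \<longleftrightarrow> finite V \<and> (\<forall>e\<in>E. e \<subseteq> V \<and> card e = 2)"

definition ferromagnetic :: "nat set set \<Rightarrow> (nat set \<Rightarrow> real) \<Rightarrow> bool" where
  "ferromagnetic E J \<longleftrightarrow> (\<forall>e\<in>E. J e \<ge> 0)"

definition configs :: "nat set \<Rightarrow> (nat \<Rightarrow> real) set" where
  "configs V = (V \<rightarrow>\<^sub>E {-1, 1})"

definition ising_weight :: "nat set set \<Rightarrow> (nat set \<Rightarrow> real) \<Rightarrow> (nat \<Rightarrow> real) \<Rightarrow> real" where
  "ising_weight E J \<sigma> = exp (\<Sum>e\<in>E. J e * (\<Prod>v\<in>e. \<sigma> v))"

definition partition_fn :: "nat set \<Rightarrow> nat set set \<Rightarrow> (nat set \<Rightarrow> real) \<Rightarrow> real" where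
  "partition_fn V E J = (\<Sum>\<sigma>\<in>configs V. ising_weight E J \<sigma>)"

definition ising_expect :: "nat set \<Rightarrow> nat set set \<Rightarrow> (nat set \<Rightarrow> real) \<Rightarrow> ((nat \<Rightarrow> real) \<Rightarrow> real) \<Rightarrow> real" where
  "ising_expect V E J f = (\<Sum>\<sigma>\<in>configs V. f \<sigma> * ising_weight E J \<sigma>) / partition_fn V E J"

text \<open>Ursell function u_m(\<sigma>_{j 0},...,\<sigma>_{j (m-1)}), sum over set partitions of {0..<m}.\<close>
definition ursell :: "nat set \<Rightarrow> nat set set \<Rightarrow> (nat set \<Rightarrow> real) \<Rightarrow> nat \<Rightarrow> (nat \<Rightarrow> nat) \<Rightarrow> real" where
  "ursell V E J m j =
     (\<Sum>P\<in>{P. partition_on {0..<m} P}.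
        (-1) ^ (card P - 1) * fact (card P - 1) *
        (\<Prod>B\<in>P. ising_expect V E J (\<lambda>\<sigma>. \<Prod>i\<in>B. \<sigma> (j i))))"

definition ursell_deriv :: "nat set \<Rightarrow> nat set set \<Rightarrow> (nat set \<Rightarrow> real) \<Rightarrow> nat \<Rightarrow> (nat \<Rightarrow> nat) \<Rightarrow> nat set \<Rightarrow> real" where
  "ursell_deriv V E J m j e0 = deriv (\<lambda>t. ursell V E (J(e0 := t)) m j) (J e0)"

end

theory Submission
  imports Defs
begin

(*
  Attach a new vertex w to v0 by an edge of coupling a and let every site equal to v0 point to w
  instead.  Summing out the spin at w shows that each correlation on the enlarged graph is the
  corresponding correlation on G multiplied by tanh a or by 1, according to the parity of the number
  of sites moved; the factor does not depend on the coupling J_{u0 v0}.  Hence the derivative of the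
  Ursell function on the enlarged graph tends to the one on G as a \<rightarrow> \<infinity>.  On the enlarged graph v0
  is no longer a site, so the hypothesis applies, and the sign passes to the limit.
*)

lemma finite_configs: "finite V \<Longrightarrow> finite (configs V)"
  unfolding configs_def by (intro finite_PiE) auto

lemma partition_fn_pos: "finite V \<Longrightarrow> partition_fn V E J > 0"
proof -
  assume "finite V"
  moreover have "(\<lambda>v\<in>V. 1) \<in> configs V"
    unfolding configs_def by auto
  ultimately show ?thesis
    unfolding partition_fn_def ising_weight_def by (intro sum_pos) (auto simp: finite_configs)
qed

lemma has_field_derivative_if_const:
  "((\<lambda>t. if b then t else c) has_field_derivative (if b then 1 else 0)) (at x)"
  by (cases b) (auto intro!: derivative_eq_intros)

lemma ising_expect_field_differentiable:
  assumes "finite V"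
  shows "(\<lambda>t. ising_expect V E (J(e0 := t)) f) field_differentiable at x"
  using partition_fn_pos[OF assms, of E "J(e0 := x)"]
  unfolding field_differentiable_def ising_expect_def partition_fn_def ising_weight_def
  by (auto intro!: derivative_eq_intros has_field_derivative_if_const)

definition block_moment :: "nat set \<Rightarrow> nat set set \<Rightarrow> (nat set \<Rightarrow> real) \<Rightarrow> (nat \<Rightarrow> nat) \<Rightarrow> nat set set \<Rightarrow> real" where
  "block_moment V E J j P = (\<Prod>B\<in>P. ising_expect V E J (\<lambda>\<sigma>. \<Prod>i\<in>B. \<sigma> (j i)))"

definition ursell_coeff :: "nat set set \<Rightarrow> real" where
  "ursell_coeff P = (-1) ^ (card P - 1) * fact (card P - 1)"

lemma ursell_eq_sum_block_moment:
  "ursell V E J m j = (\<Sum>P\<in>{P. partition_on {0..<m} P}. ursell_coeff P * block_moment V E J j P)"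
  unfolding ursell_def ursell_coeff_def block_moment_def ..

lemma block_moment_field_differentiable:
  assumes "finite V"
  shows "(\<lambda>t. block_moment V E (J(e0 := t)) j P) field_differentiable at x"
  unfolding block_moment_def field_differentiable_def
  by (rule exI, rule has_field_derivative_prod, subst DERIV_deriv_iff_field_differentiable)
    (rule ising_expect_field_differentiable[OF assms])

lemma ursell_deriv_eq_sum_block_moment:
  assumes "finite V"
  shows "ursell_deriv V E J m j e0 =
    (\<Sum>P\<in>{P. partition_on {0..<m} P}. ursell_coeff P * deriv (\<lambda>t. block_moment V E (J(e0 := t)) j P) (J e0))"
proof -
  have "(\<lambda>t. ursell_coeff P * block_moment V E (J(e0 := t)) j P) field_differentiable at (J e0)" for P
    using block_moment_field_differentiable[OF assms]
    by (intro field_differentiable_mult field_differentiable_const)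
  then show ?thesis
    unfolding ursell_deriv_def ursell_eq_sum_block_moment
    using block_moment_field_differentiable[OF assms] by (simp add: deriv_cmult)
qed

definition pendant_factor :: "nat \<Rightarrow> real \<Rightarrow> real" where
  "pendant_factor n a = (if even n then 1 else tanh a)"

lemma pendant_factor_tendsto: "(pendant_factor n \<longlongrightarrow> 1) at_top"
  unfolding pendant_factor_def by (cases "even n") (simp_all add: tanh_real_at_top)

lemma sum_pendant_spin:
  assumes "s \<in> {-1, 1}"
  shows "(\<Sum>y\<in>{-1, 1::real}. (y * s) ^ n * exp (a * (s * y))) = (exp a + exp (-a)) * pendant_factor n a"
proof -
  have "exp a + exp (-a) > 0"
    by (intro add_pos_pos) simp_all
  then show ?thesis
    using assms by (auto simp: pendant_factor_def tanh_altdef)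
qed

lemma sum_configs_insert:
  assumes "w \<notin> V"
  shows "(\<Sum>\<sigma>\<in>configs (insert w V). h \<sigma>) = (\<Sum>g\<in>configs V. \<Sum>y\<in>{-1, 1::real}. h (g(w := y)))"
proof -
  have "(\<Sum>\<sigma>\<in>configs (insert w V). h \<sigma>) = (\<Sum>(y, g)\<in>{-1, 1::real} \<times> configs V. h (g(w := y)))"
    unfolding configs_def PiE_insert_eq
    by (subst sum.reindex) (use inj_combinator[OF assms, of "\<lambda>_. {-1, 1::real}"] in \<open>auto simp: case_prod_unfold\<close>)
  also have "\<dots> = (\<Sum>g\<in>configs V. \<Sum>y\<in>{-1, 1::real}. h (g(w := y)))"
    by (simp add: sum.cartesian_product[symmetric] sum.swap[of _ "configs V"])
  finally show ?thesis .
qed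

lemma ising_weight_pendant:
  assumes "w \<notin> V" "v0 \<in> V" "E \<subseteq> Pow V" "finite E"
  shows "ising_weight (insert {v0, w} E) (J({v0, w} := a)) (g(w := y)) = exp (a * (g v0 * y)) * ising_weight E J g"
proof -
  have "{v0, w} \<notin> E" "v0 \<noteq> w"
    using assms by auto
  moreover have "(\<Sum>e\<in>E. (J({v0, w} := a)) e * (\<Prod>v\<in>e. (g(w := y)) v)) = (\<Sum>e\<in>E. J e * (\<Prod>v\<in>e. g v))"
    using assms by (intro sum.cong refl arg_cong2[where f = "(*)"] prod.cong) auto
  ultimately show ?thesis
    using assms(4) by (simp add: ising_weight_def exp_add)
qed

lemma prod_spins_pendant:
  fixes g :: "nat \<Rightarrow> real"
  assumes "w \<notin> V" "\<forall>i\<in>B. j i \<in> V" "finite B" "g v0 \<in> {-1, 1}"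
  shows "(\<Prod>i\<in>B. (g(w := y)) (if j i = v0 then w else j i))
    = (\<Prod>i\<in>B. g (j i)) * (y * g v0) ^ card {i\<in>B. j i = v0}"
proof -
  have "g v0 * g v0 = 1"
    using assms(4) by auto
  then have "(\<Prod>i\<in>B. (g(w := y)) (if j i = v0 then w else j i))
      = (\<Prod>i\<in>B. g (j i) * (if j i = v0 then y * g v0 else 1))"
    using assms(1,2) by (intro prod.cong) (auto simp: mult.assoc[symmetric])
  also have "\<dots> = (\<Prod>i\<in>B. g (j i)) * (y * g v0) ^ card {i\<in>B. j i = v0}"
    using assms(3) by (simp add: prod.distrib prod.inter_filter[symmetric])
  finally show ?thesis .
qed

lemma sum_moment_pendant:
  assumes "w \<notin> V" "v0 \<in> V" "E \<subseteq> Pow V" "finite E" "\<forall>i\<in>B. j i \<in> V" "finite B"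
  shows "(\<Sum>\<sigma>\<in>configs (insert w V). (\<Prod>i\<in>B. \<sigma> (if j i = v0 then w else j i)) *
            ising_weight (insert {v0, w} E) (J({v0, w} := a)) \<sigma>)
    = (exp a + exp (-a)) * pendant_factor (card {i\<in>B. j i = v0}) a *
        (\<Sum>g\<in>configs V. (\<Prod>i\<in>B. g (j i)) * ising_weight E J g)"
proof -
  define n where "n = card {i\<in>B. j i = v0}"
  have "(\<Sum>y\<in>{-1, 1}. (\<Prod>i\<in>B. (g(w := y)) (if j i = v0 then w else j i)) *
            ising_weight (insert {v0, w} E) (J({v0, w} := a)) (g(w := y)))
      = (exp a + exp (-a)) * pendant_factor n a * ((\<Prod>i\<in>B. g (j i)) * ising_weight E J g)"
    if "g \<in> configs V" for g
  proof -
    have spin: "g v0 \<in> {-1, 1}"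
      using that assms(2) unfolding configs_def by auto
    have "(\<Sum>y\<in>{-1, 1}. (\<Prod>i\<in>B. (g(w := y)) (if j i = v0 then w else j i)) *
            ising_weight (insert {v0, w} E) (J({v0, w} := a)) (g(w := y)))
        = (\<Sum>y\<in>{-1, 1::real}. (y * g v0) ^ n * exp (a * (g v0 * y))) * ((\<Prod>i\<in>B. g (j i)) * ising_weight E J g)"
      unfolding sum_distrib_right n_def
      by (intro sum.cong refl)
        (simp add: prod_spins_pendant[where g = g, OF assms(1,5,6) spin] ising_weight_pendant[OF assms(1-4)] del: fun_upd_apply)
    then show ?thesis
      by (simp add: sum_pendant_spin[OF spin])
  qed
  then show ?thesis
    unfolding sum_configs_insert[OF assms(1)] n_def[symmetric]
    by (simp add: sum_distrib_left)
qed

lemma ising_expect_pendant: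
  assumes "w \<notin> V" "finite V" "v0 \<in> V" "E \<subseteq> Pow V" "\<forall>i\<in>B. j i \<in> V" "finite B"
  shows "ising_expect (insert w V) (insert {v0, w} E) (J({v0, w} := a))
            (\<lambda>\<sigma>. \<Prod>i\<in>B. \<sigma> (if j i = v0 then w else j i))
    = pendant_factor (card {i\<in>B. j i = v0}) a * ising_expect V E J (\<lambda>\<sigma>. \<Prod>i\<in>B. \<sigma> (j i))"
proof -
  have "finite E"
    using assms(2,4) by (meson finite_Pow_iff finite_subset)
  moreover have "exp a + exp (-a) > 0"
    by (intro add_pos_pos) simp_all
  ultimately show ?thesis
    using sum_moment_pendant[OF assms(1,3,4) \<open>finite E\<close> assms(5,6)]
      sum_moment_pendant[OF assms(1,3,4) \<open>finite E\<close>, of "{}"]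
    by (simp add: ising_expect_def partition_fn_def pendant_factor_def)
qed

lemma block_moment_pendant:
  assumes "w \<notin> V" "finite V" "v0 \<in> V" "E \<subseteq> Pow V" "\<forall>B\<in>P. finite B \<and> (\<forall>i\<in>B. j i \<in> V)"
  shows "block_moment (insert w V) (insert {v0, w} E) (J({v0, w} := a)) (\<lambda>i. if j i = v0 then w else j i) P
    = (\<Prod>B\<in>P. pendant_factor (card {i\<in>B. j i = v0}) a) * block_moment V E J j P"
  unfolding block_moment_def prod.distrib[symmetric]
  using assms by (intro prod.cong refl) (simp add: ising_expect_pendant)

lemma ursell_deriv_pendant_tendsto:
  assumes "w \<notin> V" "finite V" "v0 \<in> V" "E \<subseteq> Pow V" "e0 \<subseteq> V" "\<forall>i<m. j i \<in> V"
  shows "((\<lambda>a. ursell_deriv (insert w V) (insert {v0, w} E) (J({v0, w} := a)) m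
              (\<lambda>i. if j i = v0 then w else j i) e0)
          \<longlongrightarrow> ursell_deriv V E J m j e0) at_top"
proof -
  define D where "D P = deriv (\<lambda>t. block_moment V E (J(e0 := t)) j P) (J e0)" for P
  define F where "F P a = (\<Prod>B\<in>P. pendant_factor (card {i\<in>B. j i = v0}) a)" for P a
  let ?PP = "{P. partition_on {0..<m} P}"
  have "e0 \<noteq> {v0, w}"
    using assms(1,5) by auto
  then have upd: "(J({v0, w} := a))(e0 := t) = (J(e0 := t))({v0, w} := a)" for a t
    by (simp add: fun_upd_twist)
  have blocks: "\<forall>B\<in>P. finite B \<and> (\<forall>i\<in>B. j i \<in> V)" if "P \<in> ?PP" for P
  proof
    fix B
    assume "B \<in> P"
    then have "B \<subseteq> {0..<m}"
      using that by (auto simp: partition_on_def)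
    then show "finite B \<and> (\<forall>i\<in>B. j i \<in> V)"
      using assms(6) finite_subset by auto
  qed
  have "ursell_deriv (insert w V) (insert {v0, w} E) (J({v0, w} := a)) m
          (\<lambda>i. if j i = v0 then w else j i) e0 = (\<Sum>P\<in>?PP. ursell_coeff P * (F P a * D P))" for a
  proof -
    have "ursell_deriv (insert w V) (insert {v0, w} E) (J({v0, w} := a)) m
          (\<lambda>i. if j i = v0 then w else j i) e0
        = (\<Sum>P\<in>?PP. ursell_coeff P * deriv (\<lambda>t. F P a * block_moment V E (J(e0 := t)) j P) (J e0))"
      using \<open>e0 \<noteq> {v0, w}\<close> assms(1-4) blocks
      by (simp add: ursell_deriv_eq_sum_block_moment upd block_moment_pendant F_def)
    also have "\<dots> = (\<Sum>P\<in>?PP. ursell_coeff P * (F P a * D P))"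
      using block_moment_field_differentiable[OF assms(2)] by (simp add: D_def deriv_cmult)
    finally show ?thesis .
  qed
  moreover have "((\<lambda>a. \<Sum>P\<in>?PP. ursell_coeff P * (F P a * D P)) \<longlongrightarrow> (\<Sum>P\<in>?PP. ursell_coeff P * (1 * D P))) at_top"
    unfolding F_def
    by (intro tendsto_intros) (rule tendsto_prod[of _ _ "\<lambda>_. 1", simplified], rule pendant_factor_tendsto)
  ultimately show ?thesis
    using ursell_deriv_eq_sum_block_moment[OF assms(2)] by (simp add: D_def)
qed

lemma finite_graph_add_pendant:
  assumes "finite_graph V E" "v0 \<in> V" "w \<notin> V"
  shows "finite_graph (insert w V) (insert {v0, w} E)"
proof -
  have "v0 \<noteq> w"
    using assms(2,3) by auto
  then have "card {v0, w} = 2"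
    by simp
  then show ?thesis
    using assms unfolding finite_graph_def by auto
qed

theorem mainTheorem11:
  assumes hyp: "\<forall>V E J k j u0 v0.
      finite_graph V E \<and> ferromagnetic E J \<and> k \<ge> 1 \<and> (\<forall>i<2*k. j i \<in> V) \<and>
      {u0, v0} \<in> E \<and> v0 \<notin> j ` {0..<2*k}
      \<longrightarrow> (-1) ^ (k - 1) * ursell_deriv V E J (2*k) j {u0, v0} \<ge> 0"
  shows "\<forall>V E J k j u0 v0.
      finite_graph V E \<and> ferromagnetic E J \<and> k \<ge> 1 \<and> (\<forall>i<2*k. j i \<in> V) \<and>
      {u0, v0} \<in> E \<and> u0 \<in> j ` {0..<2*k} \<and> v0 \<in> j ` {0..<2*k}
      \<longrightarrow> (-1) ^ (k - 1) * ursell_deriv V E J (2*k) j {u0, v0} \<ge> (0::real)"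
proof (intro allI impI)
  fix V :: "nat set" and E :: "nat set set" and J :: "nat set \<Rightarrow> real"
    and k :: nat and j :: "nat \<Rightarrow> nat" and u0 v0 :: nat
  assume "finite_graph V E \<and> ferromagnetic E J \<and> k \<ge> 1 \<and> (\<forall>i<2*k. j i \<in> V) \<and>
      {u0, v0} \<in> E \<and> u0 \<in> j ` {0..<2*k} \<and> v0 \<in> j ` {0..<2*k}"
  then have G: "finite_graph V E" and ferro: "ferromagnetic E J" and "k \<ge> 1"
    and sites: "\<forall>i<2*k. j i \<in> V" and edge: "{u0, v0} \<in> E"
    by auto
  then have "finite V" "E \<subseteq> Pow V" "{u0, v0} \<subseteq> V"
    unfolding finite_graph_def by auto
  obtain w :: nat where "w \<notin> V"
    using ex_new_if_finite[OF infinite_UNIV_nat \<open>finite V\<close>] by auto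
  define j' where "j' i = (if j i = v0 then w else j i)" for i
  have nonneg: "(-1) ^ (k - 1) * ursell_deriv (insert w V) (insert {v0, w} E) (J({v0, w} := a)) (2*k) j' {u0, v0} \<ge> 0"
    if "a \<ge> 0" for a
  proof -
    have "finite_graph (insert w V) (insert {v0, w} E)"
      using finite_graph_add_pendant G \<open>{u0, v0} \<subseteq> V\<close> \<open>w \<notin> V\<close> by auto
    moreover have "ferromagnetic (insert {v0, w} E) (J({v0, w} := a))"
      using ferro that by (auto simp: ferromagnetic_def)
    moreover have "\<forall>i<2*k. j' i \<in> insert w V" "v0 \<notin> j' ` {0..<2*k}"
      using sites \<open>w \<notin> V\<close> \<open>{u0, v0} \<subseteq> V\<close> by (auto simp: j'_def)
    ultimately show ?thesis
      using \<open>k \<ge> 1\<close> edge by (intro hyp[rule_format] conjI) auto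
  qed
  have "((\<lambda>a. (-1) ^ (k - 1) * ursell_deriv (insert w V) (insert {v0, w} E) (J({v0, w} := a)) (2*k) j' {u0, v0})
      \<longlongrightarrow> (-1) ^ (k - 1) * ursell_deriv V E J (2*k) j {u0, v0}) at_top"
    unfolding j'_def
    using \<open>w \<notin> V\<close> \<open>finite V\<close> \<open>E \<subseteq> Pow V\<close> \<open>{u0, v0} \<subseteq> V\<close> sites
    by (intro tendsto_mult_left ursell_deriv_pendant_tendsto) auto
  then show "(-1) ^ (k - 1) * ursell_deriv V E J (2*k) j {u0, v0} \<ge> 0"
  proof (rule tendsto_lowerbound)
    show "\<forall>\<^sub>F a in at_top. 0 \<le> (-1) ^ (k - 1) *
        ursell_deriv (insert w V) (insert {v0, w} E) (J({v0, w} := a)) (2*k) j' {u0, v0}"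
      using eventually_ge_at_top[of "0::real"] by eventually_elim (rule nonneg)
  qed simp
qed

end
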